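(* Under the standing setup (in either Scenario I or Scenario II), assume $0<h<\frac{1}{d_{\max}}$ and that the expected graph is strongly connected. Then: (i) For the discrete-time system $x(t_{k+1})=(I-hL_{\sigma_k})^{\bar k}x(t_k)$, for every $x(0)\in\mathbb{R}^n$, $\lim_{k\to\infty}\mathbb{E}[x(t_k)]=\mathbf{1}\bar\pi_1^T x(0)$, where $W_1=\mathbb{E}[(I-hL_{\sigma_k})^{\bar k}]=\sum_{i=1}^4 p_i (I-hL_i)^{\bar k}$ satisfies $\lim_{k\to\infty}W_1^k=\mathbf{1}\bar\pi_1^T$, and $\bar\pi_1>0$ (entrywise) is a left eigenvector of $W_1$ for eigenvalue $1$ with $\bar\pi_1^T\mathbf{1}=1$. (ii) For the limiting ($h\to0$) system $x(t_{k+1})=e^{-L_{\sigma_k}\Delta}x(t_k)$, for every $x(0)\in\mathbb{R}^n$, $\lim_{k\to\infty}\mathbb{E}[x(t_k)]=\mathbf{1}\bar\pi_2^T x(0)$, where $W_2=\mathbb{E}[e^{-L_{\sigma_k}\Delta}]=\sum_{i=1}^4 p_i e^{-L_i\Delta}$ satisfies $\lim_{k\to\infty}W_2^k=\mathbf{1}\bar\pi_2^T$, and $\bar\pi_2>0$ is a left eigenvector of $W_2$ for eigenvalue $1$ with $\bar\pi_2^T\mathbf{1}=1$. In particular both systems reach consensus in mean.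
   Context: Standing setup. $n\ge3$ agents. $G$ is an undirected connected graph on $\{1,\dots,n\}$ with symmetric $0/1$ adjacency matrix $A=[a_{ij}]$ (zero diagonal), degrees $d_i=\sum_j a_{ij}$, $d_{\max}=\max_i d_i$, and Laplacian $L=\mathrm{diag}(d_1,\dots,d_n)-A$, with entries $l_{ij}$. For a (possibly directed) $0/1$ adjacency matrix $B$ ($b_{ij}=1$ meaning agent $i$ receives from agent $j$), its Laplacian is $\mathrm{diag}(B\mathbf{1})-B$. Scenario I (agents 1,2 may fail to receive): $A_1$ is $A$ with row 1 set to zero, $A_2$ is $A$ with row 2 set to zero, $A_3$ is $A$ with rows 1 and 2 set to zero, $A_4=A$. Scenario II (agents 1,2 may fail to send): same with columns instead of rows. $L_i$ is the Laplacian of $A_i$ (so $L_4=L$). Probabilities $p_1=\alpha,p_2=\beta,p_3=\gamma,p_4=\theta\in(0,1)$ with $\alpha+\beta+\gamma+\theta=1$. The expected graph is the directed graph with weighted adjacency matrix $\sum_{i=1}^4 p_iA_i$. Sampling period $h>0$, integer $\bar k\ge1$, $\Delta=\bar k h$, $t_k=k\Delta$. $\sigma_0,\sigma_1,\dots$ are i.i.d. random variables in $\{1,2,3,4\}$ with $P(\sigma_k=i)=p_i$ (the graph is held fixed on each interval of length $\Delta$, during which the delta-operator system $\delta x=-L_{\sigma_k}x$ with step $h$ is run $\bar k$ times). The initial state $x(t_0)=x(0)\in\mathbb{R}^n$ is deterministic. $\mathbf{1}$ is the all-ones column vector. *)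

theory Defs
  imports "HOL-Analysis.Analysis" "HOL-Probability.Probability"
begin

text \<open>Matrices over the finite agent type 'n (agents = elements of 'n, n = CARD('n)).\<close>

primrec matpow :: "real^'n^'n \<Rightarrow> nat \<Rightarrow> real^'n^'n" where
  "matpow M 0 = mat 1"
| "matpow M (Suc k) = M ** matpow M k"

definition mexp :: "real^'n^'n \<Rightarrow> real^'n^'n" where
  "mexp M = (\<Sum>k. (1 / fact k) *\<^sub>R matpow M k)"

definition laplacian :: "real^'n^'n \<Rightarrow> real^'n^'n" where
  "laplacian B = (\<chi> i j. if i = j then (\<Sum>k\<in>UNIV. B$i$k) else 0) - B"

definition degree :: "real^'n^'n \<Rightarrow> 'n \<Rightarrow> real" where
  "degree A i = (\<Sum>j\<in>UNIV. A$i$j)"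

definition dmax :: "real^'n^'n \<Rightarrow> real" where
  "dmax A = Max (range (degree A))"

definition simple_graph_adj :: "real^'n^'n \<Rightarrow> bool" where
  "simple_graph_adj A \<longleftrightarrow> (\<forall>i j. A$i$j = 0 \<or> A$i$j = 1) \<and> transpose A = A
     \<and> (\<forall>i. A$i$i = 0)"

text \<open>For symmetric A this is ordinary connectivity.\<close>
definition strongly_connected :: "real^'n^'n \<Rightarrow> bool" where
  "strongly_connected B \<longleftrightarrow> (\<forall>i j. (\<lambda>u v. B$u$v > 0)\<^sup>*\<^sup>* i j)"

definition zero_rows :: "'n set \<Rightarrow> real^'n^'n \<Rightarrow> real^'n^'n" where
  "zero_rows S B = (\<chi> i j. if i \<in> S then 0 else B$i$j)"

definition zero_cols :: "'n set \<Rightarrow> real^'n^'n \<Rightarrow> real^'n^'n" where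
  "zero_cols S B = (\<chi> i j. if j \<in> S then 0 else B$i$j)"

datatype scenario = ScenarioI | ScenarioII

text \<open>Switching adjacency matrices A_1..A_4 (indices 1..4; other indices give A).
  Agents 1 and 2 are the elements a1, a2 of 'n.\<close>
definition switch_adj :: "scenario \<Rightarrow> 'n \<Rightarrow> 'n \<Rightarrow> real^'n^'n \<Rightarrow> nat \<Rightarrow> real^'n^'n" where
  "switch_adj sc a1 a2 A i =
     (let z = (case sc of ScenarioI \<Rightarrow> zero_rows | ScenarioII \<Rightarrow> zero_cols) in
      if i = 1 then z {a1} A
      else if i = 2 then z {a2} A
      else if i = 3 then z {a1, a2} A
      else A)"

primrec traj :: "(nat \<Rightarrow> real^'n^'n) \<Rightarrow> (nat \<Rightarrow> 'w \<Rightarrow> nat) \<Rightarrow> real^'n \<Rightarrow> nat \<Rightarrow> 'w \<Rightarrow> real^'n" where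
  "traj Phi \<sigma> x0 0 \<omega> = x0"
| "traj Phi \<sigma> x0 (Suc k) \<omega> = Phi (\<sigma> k \<omega>) *v traj Phi \<sigma> x0 k \<omega>"

definition ones_outer :: "real^'n \<Rightarrow> real^'n^'n" where
  "ones_outer \<pi> = (\<chi> i j. \<pi>$j)"

end

theory Submission
  imports Defs
begin

text \<open>
  Each transition matrix \<open>(I - h L\<^sub>i)\<^sup>k\<close> and \<open>exp (-\<Delta> L\<^sub>i)\<close> is row stochastic: the first
  because \<open>h d\<^sub>m\<^sub>a\<^sub>x < 1\<close>, the second because \<open>-\<Delta> L\<^sub>i\<close> is a nonnegative matrix with constant
  row sums, shifted by a multiple of \<open>I\<close>. Independence of the switching signal makes the expected
  state after \<open>k\<close> steps equal to \<open>W\<^sup>k x(0)\<close> for the mean matrix \<open>W\<close>. This \<open>W\<close> has a positive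
  diagonal and dominates \<open>p\<^sub>4\<close> times the transition matrix of the full graph, whose support contains
  every edge of the connected graph \<open>G\<close>; so some power \<open>W\<^sup>K\<close> is entrywise positive. Doeblin's
  contraction of the oscillation \<open>max - min\<close> by the factor \<open>1 - min W\<^sup>K\<close> then makes every column
  of \<open>W\<^sup>k\<close> converge to a constant, i.e. \<open>W\<^sup>k\<close> tends to \<open>1 \<pi>\<^sup>T\<close> with \<open>\<pi> > 0\<close>.
\<close>

section \<open>Powers of nonnegative matrices\<close>

lemma matpow_add: "matpow M (a + b) = matpow M a ** matpow M b"
  by (induction a) (auto simp: matrix_mul_assoc matrix_mul_lid)

lemma matpow_Suc_right: "matpow M (Suc k) = matpow M k ** M"
  using matpow_add[of M k 1] by (simp add: matrix_mul_rid)

lemma matpow_Suc_mult_vec: "matpow M (Suc k) *v x = M *v (matpow M k *v x)"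
  by (simp add: matrix_vector_mul_assoc)

lemma matpow_nonneg:
  fixes P :: "real^'n^'n"
  assumes "\<forall>i j. 0 \<le> P$i$j"
  shows "0 \<le> matpow P k $ i $ j"
  using assms
  by (induction k arbitrary: i j) (auto simp: mat_def matrix_matrix_mult_def intro!: sum_nonneg)

lemma matpow_Suc_entry_ge:
  fixes P :: "real^'n^'n"
  assumes "\<forall>i j. 0 \<le> P$i$j"
  shows "P$u$l * matpow P k $ l $ v \<le> matpow P (Suc k) $ u $ v"
  unfolding matpow.simps matrix_matrix_mult_def
  using assms matpow_nonneg[OF assms]
  by (simp, intro member_le_sum[where f = "\<lambda>l. P$u$l * matpow P k $ l $ v"]) auto

lemma matpow_entry_pos_mono:
  fixes P :: "real^'n^'n"
  assumes nonneg: "\<forall>i j. 0 \<le> P$i$j" and diag: "\<forall>i. 0 < P$i$i"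
    and pos: "0 < matpow P k $ u $ v" and "k \<le> m"
  shows "0 < matpow P m $ u $ v"
  using \<open>k \<le> m\<close>
proof (induction m rule: dec_induct)
  case base
  show ?case using pos .
next
  case (step m)
  have "0 < P$u$u * matpow P m $ u $ v" using step diag by simp
  also have "\<dots> \<le> matpow P (Suc m) $ u $ v" by (rule matpow_Suc_entry_ge[OF nonneg])
  finally show ?case .
qed

lemma matpow_entry_pos_of_path:
  fixes P :: "real^'n^'n"
  assumes nonneg: "\<forall>i j. 0 \<le> P$i$j" and path: "(\<lambda>u v. P$u$v > 0)\<^sup>*\<^sup>* i j"
  shows "\<exists>k. 0 < matpow P k $ i $ j"
  using path
proof (induction rule: converse_rtranclp_induct)
  case base
  show ?case by (rule exI[of _ 0]) (simp add: mat_def)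
next
  case (step y z)
  then obtain k where k: "0 < matpow P k $ z $ j" by blast
  have "0 < P$y$z * matpow P k $ z $ j" using step k by simp
  also have "\<dots> \<le> matpow P (Suc k) $ y $ j" by (rule matpow_Suc_entry_ge[OF nonneg])
  finally show ?case by blast
qed

lemma matpow_pos_of_strongly_connected:
  fixes P :: "real^'n^'n"
  assumes nonneg: "\<forall>i j. 0 \<le> P$i$j" and diag: "\<forall>i. 0 < P$i$i"
    and conn: "strongly_connected P"
  obtains K where "\<forall>i j. 0 < matpow P K $ i $ j"
proof -
  have "\<forall>q::'n \<times> 'n. \<exists>k. 0 < matpow P k $ fst q $ snd q"
    using matpow_entry_pos_of_path[OF nonneg] conn unfolding strongly_connected_def by blast
  then obtain f where f: "\<forall>q::'n \<times> 'n. 0 < matpow P (f q) $ fst q $ snd q"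
    by metis
  define K where "K = (\<Sum>q\<in>UNIV. f q)"
  have "f q \<le> K" for q unfolding K_def by (rule member_le_sum) auto
  then have "0 < matpow P K $ i $ j" for i j
    using matpow_entry_pos_mono[OF nonneg diag] f[rule_format, of "(i, j)"] by simp
  then show thesis using that by blast
qed

lemma strongly_connected_mono:
  assumes "strongly_connected A" and "\<forall>u v. 0 < A$u$v \<longrightarrow> 0 < B$u$v"
  shows "strongly_connected B"
proof -
  have "(\<lambda>u v. 0 < A$u$v) \<le> (\<lambda>u v. 0 < B$u$v)" using assms(2) by auto
  then show ?thesis
    using assms(1) unfolding strongly_connected_def by (auto intro: predicate2D[OF rtranclp_mono])
qed

section \<open>Row-stochastic matrices\<close>

definition row_stochastic :: "real^'n^'n \<Rightarrow> bool" where
  "row_stochastic W \<longleftrightarrow> (\<forall>i j. 0 \<le> W$i$j) \<and> (\<forall>i. (\<Sum>j\<in>UNIV. W$i$j) = 1)"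

lemma row_stochastic_mat_1: "row_stochastic (mat 1)"
  by (simp add: row_stochastic_def mat_def if_distrib sum.delta cong: if_cong)

lemma row_stochastic_mult:
  assumes P: "row_stochastic P" and Q: "row_stochastic Q"
  shows "row_stochastic (P ** Q)"
proof -
  have "(\<Sum>j\<in>UNIV. (P ** Q)$i$j) = (\<Sum>k\<in>UNIV. P$i$k * (\<Sum>j\<in>UNIV. Q$k$j))" for i
    by (simp add: matrix_matrix_mult_def sum_distrib_left) (rule sum.swap)
  with assms show ?thesis
    unfolding row_stochastic_def by (auto simp: matrix_matrix_mult_def intro!: sum_nonneg)
qed

lemma row_stochastic_matpow: "row_stochastic W \<Longrightarrow> row_stochastic (matpow W k)"
  by (induction k) (auto simp: row_stochastic_mat_1 row_stochastic_mult)

lemma row_stochastic_entry_le_1: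
  assumes "row_stochastic W"
  shows "W$i$j \<le> 1"
proof -
  have "W$i$j \<le> (\<Sum>j\<in>UNIV. W$i$j)"
    using assms by (intro member_le_sum) (auto simp: row_stochastic_def)
  with assms show ?thesis by (simp add: row_stochastic_def)
qed

lemma row_stochastic_convex_comb:
  assumes "\<forall>i\<in>S. 0 \<le> p i" and "(\<Sum>i\<in>S. p i) = 1" and "\<forall>i\<in>S. row_stochastic (\<Phi> i)"
  shows "row_stochastic (\<Sum>i\<in>S. p i *\<^sub>R \<Phi> i)"
proof -
  have "(\<Sum>v\<in>UNIV. \<Sum>i\<in>S. p i * \<Phi> i$u$v) = (\<Sum>i\<in>S. p i * (\<Sum>v\<in>UNIV. \<Phi> i$u$v))" for u
    by (subst sum.swap) (simp add: sum_distrib_left)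
  with assms show ?thesis
    unfolding row_stochastic_def by (auto simp: sum_component intro!: sum_nonneg)
qed

section \<open>Contraction of the oscillation\<close>

definition vec_max :: "real^'n \<Rightarrow> real" where
  "vec_max x = Max (range (\<lambda>i. x$i))"

definition vec_min :: "real^'n \<Rightarrow> real" where
  "vec_min x = Min (range (\<lambda>i. x$i))"

lemma vec_max_ge: "x$i \<le> vec_max x"
  unfolding vec_max_def by (rule Max_ge) auto

lemma vec_min_le: "vec_min x \<le> x$i"
  unfolding vec_min_def by (rule Min_le) auto

lemma vec_max_attained: obtains i where "vec_max x = x$i"
proof -
  have "vec_max x \<in> range (\<lambda>i. x$i)" unfolding vec_max_def by (rule Max_in) auto
  then show thesis using that by blast
qed

lemma vec_min_attained: obtains i where "vec_min x = x$i"
proof -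
  have "vec_min x \<in> range (\<lambda>i. x$i)" unfolding vec_min_def by (rule Min_in) auto
  then show thesis using that by blast
qed

lemma row_stochastic_mult_vec_bounds:
  assumes P: "row_stochastic P"
  shows "vec_min x \<le> (P *v x)$i" and "(P *v x)$i \<le> vec_max x"
proof -
  have row: "(\<Sum>l\<in>UNIV. P$i$l * c) = c" for c
    using P by (simp add: row_stochastic_def sum_distrib_right[symmetric])
  have "(\<Sum>l\<in>UNIV. P$i$l * vec_min x) \<le> (\<Sum>l\<in>UNIV. P$i$l * x$l)"
    using P by (intro sum_mono mult_left_mono) (auto simp: row_stochastic_def vec_min_le)
  then show "vec_min x \<le> (P *v x)$i" by (simp add: row matrix_vector_mult_def)
  have "(\<Sum>l\<in>UNIV. P$i$l * x$l) \<le> (\<Sum>l\<in>UNIV. P$i$l * vec_max x)"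
    using P by (intro sum_mono mult_left_mono) (auto simp: row_stochastic_def vec_max_ge)
  then show "(P *v x)$i \<le> vec_max x" by (simp add: row matrix_vector_mult_def)
qed

lemma row_stochastic_vec_max_le: "row_stochastic P \<Longrightarrow> vec_max (P *v x) \<le> vec_max x"
  by (metis vec_max_attained row_stochastic_mult_vec_bounds(2))

lemma row_stochastic_vec_min_ge: "row_stochastic P \<Longrightarrow> vec_min x \<le> vec_min (P *v x)"
  by (metis vec_min_attained row_stochastic_mult_vec_bounds(1))

text \<open>Doeblin's contraction: every row of \<open>P\<close> puts weight at least \<open>\<delta>\<close> on the
  coordinate where \<open>x\<close> is smallest and on the one where it is largest.\<close>

lemma row_stochastic_oscillation_contract:
  assumes P: "row_stochastic P" and weight: "\<forall>i j. \<delta> \<le> P$i$j" and "0 \<le> \<delta>"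
  shows "vec_max (P *v x) - vec_min (P *v x) \<le> (1 - \<delta>) * (vec_max x - vec_min x)"
proof -
  obtain l0 where l0: "vec_min x = x$l0" by (rule vec_min_attained)
  obtain l1 where l1: "vec_max x = x$l1" by (rule vec_max_attained)
  have row: "(\<Sum>l\<in>UNIV. P$i$l * c) = c" for i c
    using P by (simp add: row_stochastic_def sum_distrib_right[symmetric])
  have upper: "(P *v x)$i \<le> vec_max x - \<delta> * (vec_max x - vec_min x)" for i
  proof -
    have "\<delta> * (vec_max x - vec_min x) \<le> P$i$l0 * (vec_max x - x$l0)"
      using weight l0 vec_max_ge[of x l0] by (simp add: mult_right_mono)
    also have "\<dots> \<le> (\<Sum>l\<in>UNIV. P$i$l * (vec_max x - x$l))"
      using P vec_max_ge[of x] by (intro member_le_sum) (auto simp: row_stochastic_def)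
    also have "\<dots> = vec_max x - (P *v x)$i"
      by (simp add: row matrix_vector_mult_def right_diff_distrib sum_subtractf)
    finally show ?thesis by linarith
  qed
  have lower: "vec_min x + \<delta> * (vec_max x - vec_min x) \<le> (P *v x)$i" for i
  proof -
    have "\<delta> * (vec_max x - vec_min x) \<le> P$i$l1 * (x$l1 - vec_min x)"
      using weight l1 vec_min_le[of x l1] by (simp add: mult_right_mono)
    also have "\<dots> \<le> (\<Sum>l\<in>UNIV. P$i$l * (x$l - vec_min x))"
      using P vec_min_le[of x] by (intro member_le_sum) (auto simp: row_stochastic_def)
    also have "\<dots> = (P *v x)$i - vec_min x"
      by (simp add: row matrix_vector_mult_def right_diff_distrib sum_subtractf)
    finally show ?thesis by linarith
  qed
  obtain i0 where "vec_max (P *v x) = (P *v x)$i0" by (rule vec_max_attained)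
  moreover obtain i1 where "vec_min (P *v x) = (P *v x)$i1" by (rule vec_min_attained)
  moreover have "0 \<le> \<delta> * (vec_max x - vec_min x)"
    using \<open>0 \<le> \<delta>\<close> vec_min_le[of x l1] l1 by simp
  ultimately show ?thesis using upper[of i0] lower[of i1] by (simp add: algebra_simps)
qed

lemma oscillation_matpow_le:
  assumes W: "row_stochastic W" and lower: "\<forall>i j. \<delta> \<le> matpow W K $ i $ j" and "0 \<le> \<delta>"
  shows "vec_max (matpow W (K * m) *v x) - vec_min (matpow W (K * m) *v x)
           \<le> (1 - \<delta>)^m * (vec_max x - vec_min x)"
proof (induction m)
  case 0
  show ?case by simp
next
  case (Suc m)
  have "\<delta> \<le> 1" using lower row_stochastic_entry_le_1[OF row_stochastic_matpow[OF W]] by (meson order.trans)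
  have "matpow W (K * Suc m) *v x = matpow W K *v (matpow W (K * m) *v x)"
    by (simp add: matpow_add matrix_vector_mul_assoc)
  then have "vec_max (matpow W (K * Suc m) *v x) - vec_min (matpow W (K * Suc m) *v x)
      \<le> (1 - \<delta>) * (vec_max (matpow W (K * m) *v x) - vec_min (matpow W (K * m) *v x))"
    using row_stochastic_oscillation_contract[OF row_stochastic_matpow[OF W] lower \<open>0 \<le> \<delta>\<close>] by simp
  also have "\<dots> \<le> (1 - \<delta>) * ((1 - \<delta>)^m * (vec_max x - vec_min x))"
    using Suc \<open>\<delta> \<le> 1\<close> by (intro mult_left_mono) auto
  finally show ?case by simp
qed

lemma row_stochastic_iterates_converge:
  assumes W: "row_stochastic W" and lower: "\<forall>i j. \<delta> \<le> matpow W K $ i $ j" and "0 < \<delta>"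
  obtains L where "\<And>i. (\<lambda>k. (matpow W k *v x)$i) \<longlonglongrightarrow> L"
    and "\<And>k. vec_min (matpow W k *v x) \<le> L"
proof -
  define a where "a k = vec_max (matpow W k *v x)" for k
  define b where "b k = vec_min (matpow W k *v x)" for k
  have "decseq a"
    unfolding decseq_Suc_iff a_def matpow_Suc_mult_vec using row_stochastic_vec_max_le[OF W] by blast
  have "incseq b"
    unfolding incseq_Suc_iff b_def matpow_Suc_mult_vec using row_stochastic_vec_min_ge[OF W] by blast
  have b_le_a: "b k \<le> a k" for k
    unfolding a_def b_def by (meson vec_max_ge vec_min_le order.trans)
  obtain La where La: "a \<longlonglongrightarrow> La" "\<And>k. La \<le> a k"
    using decseq_convergent[OF \<open>decseq a\<close>, of "b 0"] b_le_a \<open>incseq b\<close>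
    by (metis incseq_def le0 order.trans)
  obtain Lb where Lb: "b \<longlonglongrightarrow> Lb" "\<And>k. b k \<le> Lb"
    using incseq_convergent[OF \<open>incseq b\<close>, of "a 0"] b_le_a \<open>decseq a\<close>
    by (metis decseq_def le0 order.trans)
  have "\<delta> \<le> 1"
    using lower row_stochastic_entry_le_1[OF row_stochastic_matpow[OF W]] by (meson order.trans)
  have "La - Lb \<le> 0"
  proof (rule LIMSEQ_le_const)
    show "(\<lambda>m. (1 - \<delta>)^m * (a 0 - b 0)) \<longlonglongrightarrow> 0"
      using \<open>0 < \<delta>\<close> \<open>\<delta> \<le> 1\<close> by (intro tendsto_mult_left_zero LIMSEQ_power_zero) auto
    have "La - Lb \<le> a (K * m) - b (K * m)" for m using La(2) Lb(2) by (intro diff_mono)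
    moreover have "a (K * m) - b (K * m) \<le> (1 - \<delta>)^m * (a 0 - b 0)" for m
      using oscillation_matpow_le[OF W lower] \<open>0 < \<delta>\<close> unfolding a_def b_def by simp
    ultimately show "\<exists>N. \<forall>m\<ge>N. La - Lb \<le> (1 - \<delta>)^m * (a 0 - b 0)"
      by (meson order.trans)
  qed
  moreover have "Lb \<le> La" using LIMSEQ_le[OF Lb(1) La(1)] b_le_a by blast
  ultimately have "La = Lb" by simp
  have "(\<lambda>k. (matpow W k *v x)$i) \<longlonglongrightarrow> La" for i
  proof (rule tendsto_sandwich[OF _ _ Lb(1)[folded \<open>La = Lb\<close>] La(1)])
    show "\<forall>\<^sub>F k in sequentially. b k \<le> (matpow W k *v x)$i"
      unfolding b_def by (simp add: vec_min_le)
    show "\<forall>\<^sub>F k in sequentially. (matpow W k *v x)$i \<le> a k"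
      unfolding a_def by (simp add: vec_max_ge)
  qed
  with Lb(2) \<open>La = Lb\<close> show thesis using that unfolding b_def by blast
qed

section \<open>Convergence of powers of a primitive stochastic matrix\<close>

lemma tendsto_matrix_mult_right:
  fixes f :: "nat \<Rightarrow> real^'m^'n"
  assumes "f \<longlonglongrightarrow> A"
  shows "(\<lambda>k. f k ** B) \<longlonglongrightarrow> A ** B"
  unfolding matrix_matrix_mult_def
  by (intro vec_tendstoI) (simp add: tendsto_sum tendsto_mult tendsto_vec_nth assms)

lemma tendsto_matrix_vector_mult:
  fixes f :: "nat \<Rightarrow> real^'m^'n"
  assumes "f \<longlonglongrightarrow> A"
  shows "(\<lambda>k. f k *v x) \<longlonglongrightarrow> A *v x"
  unfolding matrix_vector_mult_def
  by (intro vec_tendstoI) (simp add: tendsto_sum tendsto_mult tendsto_vec_nth assms)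

lemma matpow_tendsto_ones_outer_sum_eq_1:
  assumes W: "row_stochastic W" and lim: "(\<lambda>k. matpow W k) \<longlonglongrightarrow> ones_outer \<pi>"
  shows "(\<Sum>j\<in>UNIV. \<pi>$j) = 1"
proof -
  fix i
  have "(\<lambda>k. \<Sum>j\<in>UNIV. matpow W k $ i $ j) \<longlonglongrightarrow> (\<Sum>j\<in>UNIV. ones_outer \<pi> $ i $ j)"
    by (intro tendsto_sum tendsto_vec_nth lim)
  moreover have "(\<lambda>k. \<Sum>j\<in>UNIV. matpow W k $ i $ j) = (\<lambda>k. 1)"
    using row_stochastic_matpow[OF W] by (simp add: row_stochastic_def)
  ultimately have "(\<lambda>k. 1) \<longlonglongrightarrow> (\<Sum>j\<in>UNIV. \<pi>$j)" by (simp add: ones_outer_def)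
  then show ?thesis by (rule LIMSEQ_unique[OF tendsto_const, symmetric])
qed

lemma matpow_tendsto_ones_outer_left_eigen:
  assumes lim: "(\<lambda>k. matpow W k) \<longlonglongrightarrow> ones_outer \<pi>"
  shows "\<pi> v* W = \<pi>"
proof -
  have "(\<lambda>k. matpow W (Suc k)) \<longlonglongrightarrow> ones_outer \<pi> ** W"
    unfolding matpow_Suc_right by (rule tendsto_matrix_mult_right[OF lim])
  then have "ones_outer \<pi> ** W = ones_outer \<pi>"
    using LIMSEQ_Suc[OF lim] LIMSEQ_unique by blast
  then show ?thesis
    by (simp add: vec_eq_iff ones_outer_def matrix_matrix_mult_def vector_matrix_mult_def)
qed

lemma row_stochastic_matpow_tendsto_ones_outer:
  fixes W :: "real^'n^'n"
  assumes W: "row_stochastic W" and diag: "\<forall>i. 0 < W$i$i" and conn: "strongly_connected W"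
  shows "\<exists>\<pi>. (\<forall>j. \<pi>$j > 0) \<and> \<pi> v* W = \<pi> \<and> (\<Sum>j\<in>UNIV. \<pi>$j) = 1 \<and>
           (\<lambda>k. matpow W k) \<longlonglongrightarrow> ones_outer \<pi>"
proof -
  have "\<forall>i j. 0 \<le> W$i$j" using W by (simp add: row_stochastic_def)
  then obtain K where pos: "\<forall>i j. 0 < matpow W K $ i $ j"
    using matpow_pos_of_strongly_connected diag conn by blast
  define \<delta> where "\<delta> = Min (range (\<lambda>(i, j). matpow W K $ i $ j))"
  have lower: "\<forall>i j. \<delta> \<le> matpow W K $ i $ j"
    unfolding \<delta>_def by (auto intro!: Min_le image_eqI[where x = "(i, j)" for i j])
  have "\<delta> \<in> range (\<lambda>(i, j). matpow W K $ i $ j)" unfolding \<delta>_def by (rule Min_in) auto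
  then have "0 < \<delta>" using pos by auto
  have column: "(matpow W k *v axis j 1)$i = matpow W k $ i $ j" for k i j
    by (simp add: matrix_vector_mult_basis column_def)
  have "\<exists>L. (\<forall>i. (\<lambda>k. matpow W k $ i $ j) \<longlonglongrightarrow> L) \<and> \<delta> \<le> L" for j
  proof -
    obtain L where lim: "\<And>i. (\<lambda>k. (matpow W k *v axis j 1)$i) \<longlonglongrightarrow> L"
      and L: "\<And>k. vec_min (matpow W k *v axis j 1) \<le> L"
      using row_stochastic_iterates_converge[OF W lower \<open>0 < \<delta>\<close>, where x = "axis j 1"] by blast
    obtain i where "vec_min (matpow W K *v axis j 1) = (matpow W K *v axis j 1)$i"
      by (rule vec_min_attained)
    then have "\<delta> \<le> L" using lower[rule_format, of i j] L[of K] column[of K j i] by linarith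
    with lim show ?thesis unfolding column by blast
  qed
  then have "\<forall>j. \<exists>L. (\<forall>i. (\<lambda>k. matpow W k $ i $ j) \<longlonglongrightarrow> L) \<and> \<delta> \<le> L" by blast
  from choice[OF this] obtain g
    where g: "\<forall>j. (\<forall>i. (\<lambda>k. matpow W k $ i $ j) \<longlonglongrightarrow> g j) \<and> \<delta> \<le> g j" by blast
  define \<pi> where "\<pi> = (\<chi> j. g j)"
  have lim: "(\<lambda>k. matpow W k) \<longlonglongrightarrow> ones_outer \<pi>"
    by (intro vec_tendstoI) (simp add: ones_outer_def \<pi>_def g)
  moreover have "\<forall>j. \<pi>$j > 0" using g \<open>0 < \<delta>\<close> by (auto simp: \<pi>_def intro: less_le_trans)
  ultimately show ?thesis
    using matpow_tendsto_ones_outer_sum_eq_1[OF W] matpow_tendsto_ones_outer_left_eigen by blast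
qed

section \<open>The matrix exponential\<close>

lemma matpow_entry_abs_le:
  fixes M :: "real^'n^'n"
  assumes bound: "\<forall>i j. \<bar>M$i$j\<bar> \<le> B"
  shows "\<bar>matpow M k $ u $ v\<bar> \<le> (real CARD('n) * B)^k"
proof (induction k arbitrary: u v)
  case 0
  show ?case by (simp add: mat_def)
next
  case (Suc k)
  have "0 \<le> B" using bound abs_ge_zero order_trans by blast
  have "\<bar>matpow M (Suc k) $ u $ v\<bar> \<le> (\<Sum>l\<in>UNIV. \<bar>M$u$l\<bar> * \<bar>matpow M k $ l $ v\<bar>)"
    by (simp add: matrix_matrix_mult_def abs_mult[symmetric] sum_abs)
  also have "\<dots> \<le> (\<Sum>l\<in>(UNIV::'n set). B * (real CARD('n) * B)^k)"
    using bound Suc \<open>0 \<le> B\<close> by (intro sum_mono mult_mono) auto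
  also have "\<dots> = (real CARD('n) * B)^Suc k" by simp
  finally show ?case .
qed

lemma summable_abs_matpow_entry_over_fact:
  fixes M :: "real^'n^'n"
  shows "summable (\<lambda>k. \<bar>matpow M k $ u $ v / fact k\<bar>)"
proof -
  define B where "B = (\<Sum>i\<in>UNIV. \<Sum>j\<in>UNIV. \<bar>M$i$j\<bar>)"
  have "\<bar>M$i$j\<bar> \<le> B" for i j
  proof -
    have "\<bar>M$i$j\<bar> \<le> (\<Sum>j\<in>UNIV. \<bar>M$i$j\<bar>)" by (rule member_le_sum) auto
    also have "\<dots> \<le> B"
      unfolding B_def by (rule member_le_sum[where f = "\<lambda>i. \<Sum>j\<in>UNIV. \<bar>M$i$j\<bar>"]) (auto intro: sum_nonneg)
    finally show ?thesis .
  qed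
  then have "\<bar>matpow M k $ u $ v / fact k\<bar> \<le> inverse (fact k) * (real CARD('n) * B)^k" for k
  proof -
    have "\<bar>matpow M k $ u $ v / fact k\<bar> = inverse (fact k) * \<bar>matpow M k $ u $ v\<bar>"
      by (simp add: abs_mult divide_inverse mult.commute)
    also have "\<dots> \<le> inverse (fact k) * (real CARD('n) * B)^k"
      using \<open>\<And>i j. \<bar>M$i$j\<bar> \<le> B\<close> by (intro mult_left_mono matpow_entry_abs_le) auto
    finally show ?thesis .
  qed
  then show ?thesis
    by (intro summable_comparison_test[OF _ summable_exp[of "real CARD('n) * B"]]) auto
qed

lemma summable_mexp: "summable (\<lambda>k. (1 / fact k) *\<^sub>R matpow (M :: real^'n^'n) k)"
proof (rule summable_comparison_test)
  show "summable (\<lambda>k. \<Sum>i\<in>UNIV. \<Sum>j\<in>UNIV. \<bar>matpow M k $ i $ j / fact k\<bar>)"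
    by (intro summable_sum summable_abs_matpow_entry_over_fact)
  have norm_le: "norm X \<le> (\<Sum>i\<in>UNIV. \<Sum>j\<in>UNIV. \<bar>X$i$j\<bar>)" for X :: "real^'n^'n"
  proof -
    have "norm X \<le> (\<Sum>i\<in>UNIV. norm (X$i))" unfolding norm_vec_def by (rule L2_set_le_sum) simp
    also have "\<dots> \<le> (\<Sum>i\<in>UNIV. \<Sum>j\<in>UNIV. \<bar>X$i$j\<bar>)" by (intro sum_mono norm_le_l1_cart)
    finally show ?thesis .
  qed
  show "\<exists>N. \<forall>k\<ge>N. norm ((1 / fact k) *\<^sub>R matpow M k)
      \<le> (\<Sum>i\<in>UNIV. \<Sum>j\<in>UNIV. \<bar>matpow M k $ i $ j / fact k\<bar>)"
    using norm_le[of "(1 / fact k) *\<^sub>R matpow M k" for k] by (simp add: divide_inverse mult.commute)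
qed

lemma mexp_entry: "mexp M $ u $ v = (\<Sum>k. matpow M k $ u $ v / fact k)"
proof -
  have rows: "summable (\<lambda>k. ((1 / fact k) *\<^sub>R matpow M k) $ u)"
    by (rule bounded_linear.summable[OF bounded_linear_vec_nth summable_mexp])
  have "mexp M $ u = (\<Sum>k. ((1 / fact k) *\<^sub>R matpow M k) $ u)"
    unfolding mexp_def by (rule bounded_linear.suminf[OF bounded_linear_vec_nth summable_mexp])
  then show ?thesis
    using bounded_linear.suminf[OF bounded_linear_vec_nth rows] by (simp add: divide_inverse mult.commute)
qed

lemma summable_matpow_entry_over_fact: "summable (\<lambda>k. matpow M k $ u $ v / fact k)"
  using summable_abs_matpow_entry_over_fact by (rule summable_rabs_cancel)

lemma binomial_sum_Suc:
  fixes z :: "nat \<Rightarrow> 'a::real_vector"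
  shows "(\<Sum>j\<le>Suc k. (real (Suc k choose j) * a^(Suc k - j)) *\<^sub>R z j) =
         (\<Sum>j\<le>k. (real (k choose j) * a^(k - j)) *\<^sub>R z (Suc j))
         + a *\<^sub>R (\<Sum>j\<le>k. (real (k choose j) * a^(k - j)) *\<^sub>R z j)"
proof -
  have "a *\<^sub>R (\<Sum>j\<le>k. (real (k choose j) * a^(k - j)) *\<^sub>R z j)
      = (\<Sum>j\<le>k. (real (k choose j) * a^(Suc k - j)) *\<^sub>R z j)"
    unfolding scaleR_sum_right by (intro sum.cong refl) (simp add: Suc_diff_le)
  also have "\<dots> = (\<Sum>j\<le>Suc k. (real (k choose j) * a^(Suc k - j)) *\<^sub>R z j)"
    by simp
  also have "\<dots> = a^Suc k *\<^sub>R z 0 + (\<Sum>j\<le>k. (real (k choose Suc j) * a^(k - j)) *\<^sub>R z (Suc j))"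
    by (simp add: sum.atMost_Suc_shift del: sum.atMost_Suc)
  finally show ?thesis
    by (simp add: sum.atMost_Suc_shift sum.distrib scaleR_add_left algebra_simps del: sum.atMost_Suc)
qed

lemma matrix_add_rdistrib: "(A + B) ** C = A ** C + B ** C"
  by (vector matrix_matrix_mult_def sum.distrib[symmetric] field_simps)

lemma matrix_mult_sum_right: "X ** (\<Sum>j\<in>J. f j) = (\<Sum>j\<in>J. X ** f j)"
  by (induction J rule: infinite_finite_induct) (simp_all add: matrix_add_ldistrib)

lemma matpow_add_scalar_mat:
  fixes X :: "real^'n^'n"
  shows "matpow (X + a *\<^sub>R mat 1) k = (\<Sum>j\<le>k. (real (k choose j) * a^(k - j)) *\<^sub>R matpow X j)"
proof (induction k)
  case 0
  show ?case by simp
next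
  case (Suc k)
  have "matpow (X + a *\<^sub>R mat 1) (Suc k) = X ** matpow (X + a *\<^sub>R mat 1) k + a *\<^sub>R matpow (X + a *\<^sub>R mat 1) k"
    by (simp add: matrix_add_rdistrib scalar_matrix_assoc[symmetric])
  also have "X ** matpow (X + a *\<^sub>R mat 1) k = (\<Sum>j\<le>k. (real (k choose j) * a^(k - j)) *\<^sub>R matpow X (Suc j))"
    by (simp add: Suc.IH matrix_mult_sum_right matrix_scalar_ac scalar_matrix_assoc[symmetric])
  finally show ?case using Suc.IH binomial_sum_Suc[where z = "matpow X"] by simp
qed

lemma mexp_add_scalar_mat_entry:
  fixes X :: "real^'n^'n"
  shows "mexp (X + a *\<^sub>R mat 1) $ u $ v = exp a * mexp X $ u $ v"
proof -
  let ?z = "\<lambda>j. matpow X j $ u $ v / fact j" and ?b = "\<lambda>i. a^i / fact i"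
  have "exp a * (\<Sum>j. ?z j) = (\<Sum>j. ?z j) * (\<Sum>i. ?b i)"
    by (simp add: exp_def divide_inverse_commute scaleR_conv_of_real)
  also have "\<dots> = (\<Sum>k. \<Sum>j\<le>k. ?z j * ?b (k - j))"
  proof (rule Cauchy_product)
    show "summable (\<lambda>j. norm (?z j))" using summable_abs_matpow_entry_over_fact by simp
    show "summable (\<lambda>i. norm (?b i))"
      using summable_norm_exp[of a] by (simp add: divide_inverse mult.commute scaleR_conv_of_real)
  qed
  also have "\<dots> = (\<Sum>k. matpow (X + a *\<^sub>R mat 1) k $ u $ v / fact k)"
  proof (rule suminf_cong)
    fix k
    have "?z j * ?b (k - j) = real (k choose j) * a^(k - j) * matpow X j $ u $ v / fact k"
      if "j \<le> k" for j
      using that by (simp add: binomial_fact field_simps)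
    then show "(\<Sum>j\<le>k. ?z j * ?b (k - j)) = matpow (X + a *\<^sub>R mat 1) k $ u $ v / fact k"
      by (simp add: matpow_add_scalar_mat sum_component sum_divide_distrib)
  qed
  finally show ?thesis by (simp add: mexp_entry)
qed

lemma mexp_add_scalar_mat: "mexp (X + a *\<^sub>R mat 1) = exp a *\<^sub>R mexp (X :: real^'n^'n)"
  by (simp add: vec_eq_iff mexp_add_scalar_mat_entry)

lemma matpow_row_sum:
  fixes X :: "real^'n^'n"
  assumes rows: "\<forall>i. (\<Sum>j\<in>UNIV. X$i$j) = r"
  shows "(\<Sum>v\<in>UNIV. matpow X k $ u $ v) = r^k"
proof (induction k arbitrary: u)
  case 0
  show ?case by (simp add: mat_def)
next
  case (Suc k)
  have "(\<Sum>v\<in>UNIV. matpow X (Suc k) $ u $ v) = (\<Sum>l\<in>UNIV. X$u$l * (\<Sum>v\<in>UNIV. matpow X k $ l $ v))"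
    by (simp add: matrix_matrix_mult_def sum_distrib_left) (rule sum.swap)
  also have "\<dots> = r^Suc k" using rows by (simp add: Suc.IH sum_distrib_right[symmetric])
  finally show ?case .
qed

lemma mexp_entry_ge_term:
  fixes X :: "real^'n^'n"
  assumes "\<forall>i j. 0 \<le> X$i$j"
  shows "matpow X j $ u $ v / fact j \<le> mexp X $ u $ v"
  unfolding mexp_entry using assms
  by (intro sum_le_suminf[where I = "{j}", simplified] summable_matpow_entry_over_fact)
     (auto simp: matpow_nonneg)

lemma row_stochastic_mexp_add_scalar_mat:
  fixes X :: "real^'n^'n"
  assumes nonneg: "\<forall>i j. 0 \<le> X$i$j" and rows: "\<forall>i. (\<Sum>j\<in>UNIV. X$i$j) = r"
  shows "row_stochastic (mexp (X + (- r) *\<^sub>R mat 1))"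
proof -
  have "(\<Sum>v\<in>UNIV. mexp X $ u $ v) = exp r" for u
  proof -
    have "(\<Sum>v\<in>UNIV. mexp X $ u $ v) = (\<Sum>k. \<Sum>v\<in>UNIV. matpow X k $ u $ v / fact k)"
      unfolding mexp_entry by (rule suminf_sum[symmetric]) (rule summable_matpow_entry_over_fact)
    also have "\<dots> = (\<Sum>k. r^k / fact k)"
      by (simp add: matpow_row_sum[OF rows] sum_divide_distrib[symmetric])
    also have "\<dots> = exp r" by (simp add: exp_def divide_inverse_commute scaleR_conv_of_real)
    finally show ?thesis .
  qed
  moreover have "0 \<le> mexp X $ u $ v" for u v
    using mexp_entry_ge_term[OF nonneg, of 0] by (meson divide_nonneg_nonneg fact_ge_zero matpow_nonneg nonneg order.trans)
  ultimately show ?thesis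
    unfolding row_stochastic_def mexp_add_scalar_mat
    by (simp add: sum_distrib_left[symmetric] exp_minus)
qed

section \<open>Transition matrices generated by a Laplacian\<close>

lemma laplacian_entry:
  "laplacian B $ u $ v = (if u = v then (\<Sum>k\<in>UNIV. B$u$k) else 0) - B$u$v"
  by (simp add: laplacian_def)

lemma laplacian_row_sum: "(\<Sum>v\<in>UNIV. laplacian B $ u $ v) = 0"
  by (simp add: laplacian_entry sum_subtractf)

context
  fixes B :: "real^'n^'n" and c :: real
  assumes nonneg: "\<forall>u v. 0 \<le> B$u$v" and degree_le: "\<forall>u. (\<Sum>v\<in>UNIV. B$u$v) \<le> c"
begin

lemma euler_step_entry:
  "(mat 1 - h *\<^sub>R laplacian B) $ u $ v = (if u = v then 1 - h * (\<Sum>k\<in>UNIV. B$u$k) else 0) + h * B$u$v"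
  by (simp add: laplacian_entry mat_def algebra_simps)

lemma euler_step_entry_pos:
  assumes "0 < h" and "h * c < 1" and "u = v \<or> 0 < B$u$v"
  shows "0 < (mat 1 - h *\<^sub>R laplacian B) $ u $ v"
proof -
  have "h * (\<Sum>k\<in>UNIV. B$u$k) \<le> h * c"
    using degree_le assms(1) by (simp add: mult_left_mono)
  then have diag: "0 < 1 - h * (\<Sum>k\<in>UNIV. B$u$k)" using assms(2) by linarith
  have "0 \<le> h * B$u$v" using nonneg assms(1) by simp
  then show ?thesis
    using diag assms(1,3) unfolding euler_step_entry by (cases "u = v") auto
qed

lemma row_stochastic_euler_step:
  assumes "0 < h" and "h * c < 1"
  shows "row_stochastic (mat 1 - h *\<^sub>R laplacian B)"
proof -
  have "0 \<le> (mat 1 - h *\<^sub>R laplacian B) $ u $ v" for u v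
  proof (cases "u = v")
    case True
    then show ?thesis using euler_step_entry_pos[OF assms, of u v] by simp
  next
    case False
    then show ?thesis unfolding euler_step_entry using nonneg \<open>0 < h\<close> by simp
  qed
  moreover have "(\<Sum>v\<in>UNIV. (mat 1 - h *\<^sub>R laplacian B) $ u $ v) = 1" for u
  proof -
    have "(\<Sum>v\<in>UNIV. (mat 1 - h *\<^sub>R laplacian B) $ u $ v)
        = (\<Sum>v\<in>UNIV. (mat 1 :: real^'n^'n) $ u $ v) - h * (\<Sum>v\<in>UNIV. laplacian B $ u $ v)"
      by (simp add: sum_subtractf sum_distrib_left)
    then show ?thesis by (simp add: laplacian_row_sum mat_def)
  qed
  ultimately show ?thesis by (simp add: row_stochastic_def)
qed

lemma euler_flow_properties:
  assumes "0 < h" and "h * c < 1" and "1 \<le> kbar"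
  defines "P \<equiv> matpow (mat 1 - h *\<^sub>R laplacian B) kbar"
  shows "row_stochastic P" and "0 < P $ u $ u" and "0 < B$u$v \<Longrightarrow> 0 < P $ u $ v"
proof -
  let ?E = "mat 1 - h *\<^sub>R laplacian B"
  have E: "row_stochastic ?E" by (rule row_stochastic_euler_step[OF assms(1,2)])
  then show "row_stochastic P" unfolding P_def by (rule row_stochastic_matpow)
  have E_nonneg: "\<forall>i j. 0 \<le> ?E $ i $ j" using E by (simp add: row_stochastic_def)
  have E_diag: "\<forall>i. 0 < ?E $ i $ i" using euler_step_entry_pos[OF assms(1,2)] by blast
  have "0 < matpow ?E 1 $ x $ y" if "x = y \<or> 0 < B$x$y" for x y
    using euler_step_entry_pos[OF assms(1,2) that] by simp
  then have "0 < P $ x $ y" if "x = y \<or> 0 < B$x$y" for x y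
    unfolding P_def using matpow_entry_pos_mono[OF E_nonneg E_diag _ \<open>1 \<le> kbar\<close>] that by blast
  then show "0 < P $ u $ u" and "0 < B$u$v \<Longrightarrow> 0 < P $ u $ v" by auto
qed

text \<open>\<open>-t L\<close> is a nonnegative matrix with constant row sums \<open>t c\<close>, shifted by \<open>-t c I\<close>.\<close>

lemma neg_laplacian_eq_shift:
  "(- t) *\<^sub>R laplacian B = t *\<^sub>R (c *\<^sub>R mat 1 - laplacian B) + (- (t * c)) *\<^sub>R mat 1"
  by (simp add: algebra_simps)

lemma shifted_laplacian_entry:
  "(t *\<^sub>R (c *\<^sub>R mat 1 - laplacian B)) $ u $ v
     = t * ((if u = v then c - (\<Sum>k\<in>UNIV. B$u$k) else 0) + B$u$v)"
  by (simp add: laplacian_entry mat_def algebra_simps)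

lemma exp_flow_properties:
  assumes "0 < t"
  defines "P \<equiv> mexp ((- t) *\<^sub>R laplacian B)"
  shows "row_stochastic P" and "0 < P $ u $ u" and "0 < B$u$v \<Longrightarrow> 0 < P $ u $ v"
proof -
  let ?X = "t *\<^sub>R (c *\<^sub>R mat 1 - laplacian B)"
  have X_nonneg: "\<forall>i j. 0 \<le> ?X $ i $ j"
    using nonneg degree_le \<open>0 < t\<close> unfolding shifted_laplacian_entry by auto
  have X_rows: "\<forall>i. (\<Sum>j\<in>UNIV. ?X $ i $ j) = t * c"
  proof
    fix i
    have "(\<Sum>j\<in>UNIV. ?X $ i $ j)
        = t * (c * (\<Sum>j\<in>UNIV. (mat 1 :: real^'n^'n) $ i $ j) - (\<Sum>j\<in>UNIV. laplacian B $ i $ j))"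
      by (simp add: sum_subtractf sum_distrib_left right_diff_distrib)
    then show "(\<Sum>j\<in>UNIV. ?X $ i $ j) = t * c" by (simp add: laplacian_row_sum mat_def)
  qed
  have P: "P = mexp (?X + (- (t * c)) *\<^sub>R mat 1)" unfolding P_def neg_laplacian_eq_shift ..
  then show "row_stochastic P" using row_stochastic_mexp_add_scalar_mat[OF X_nonneg X_rows] by simp
  have P_entry: "P $ u $ v = exp (- (t * c)) * mexp ?X $ u $ v" for u v
    unfolding P mexp_add_scalar_mat by simp
  have "1 \<le> mexp ?X $ u $ u" using mexp_entry_ge_term[OF X_nonneg, of 0 u u] by (simp add: mat_def)
  then show "0 < P $ u $ u" unfolding P_entry by (simp add: less_le_trans[OF zero_less_one])
  assume "0 < B$u$v"
  then have "0 < ?X $ u $ v"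
    using nonneg degree_le \<open>0 < t\<close> unfolding shifted_laplacian_entry by (auto simp: add_nonneg_pos)
  also have "?X $ u $ v \<le> mexp ?X $ u $ v" using mexp_entry_ge_term[OF X_nonneg, of 1 u v] by simp
  finally show "0 < P $ u $ v" unfolding P_entry by simp
qed

end

lemma switch_adj_A: "switch_adj sc a1 a2 A 4 = A"
  by (simp add: switch_adj_def)

lemma switch_adj_entry_cases:
  "switch_adj sc a1 a2 A i $ u $ v = 0 \<or> switch_adj sc a1 a2 A i $ u $ v = A$u$v"
  unfolding switch_adj_def Let_def zero_rows_def zero_cols_def by (cases sc) auto

lemma switch_adj_bounds:
  assumes "\<forall>u v. 0 \<le> A$u$v"
  shows "0 \<le> switch_adj sc a1 a2 A i $ u $ v"
    and "(\<Sum>v\<in>UNIV. switch_adj sc a1 a2 A i $ u $ v) \<le> dmax A"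
proof -
  have entry: "0 \<le> switch_adj sc a1 a2 A i $ u $ v \<and> switch_adj sc a1 a2 A i $ u $ v \<le> A$u$v" for v
    using switch_adj_entry_cases[of sc a1 a2 A i u v] assms by auto
  then show "0 \<le> switch_adj sc a1 a2 A i $ u $ v" by blast
  have "(\<Sum>v\<in>UNIV. switch_adj sc a1 a2 A i $ u $ v) \<le> degree A u"
    unfolding degree_def using entry by (intro sum_mono) blast
  also have "\<dots> \<le> dmax A" unfolding dmax_def by (rule Max_ge) auto
  finally show "(\<Sum>v\<in>UNIV. switch_adj sc a1 a2 A i $ u $ v) \<le> dmax A" .
qed

section \<open>The expected trajectory under an independent switching signal\<close>

lemma sum_scaleR_matrix_vector_mult:
  "(\<Sum>i\<in>S. c i *\<^sub>R A i) *v y = (\<Sum>i\<in>S. c i *\<^sub>R (A i *v (y :: real^'n)))"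
  by (induction S rule: infinite_finite_induct)
     (simp_all add: matrix_vector_mult_add_rdistrib scaleR_matrix_vector_assoc)

context prob_space
begin

lemma integral_indicator_scaleR:
  fixes c :: "'b::{banach, second_countable_topology}"
  assumes "A \<in> events"
  shows "integrable M (\<lambda>\<omega>. indicator A \<omega> *\<^sub>R c)"
    and "integral\<^sup>L M (\<lambda>\<omega>. indicator A \<omega> *\<^sub>R c) = prob A *\<^sub>R c"
  using has_bochner_integral_indicator[OF assms, of c]
  by (auto simp: has_bochner_integral_iff emeasure_eq_measure)

context
  fixes \<sigma> :: "nat \<Rightarrow> 'a \<Rightarrow> nat" and S :: "nat set" and p :: "nat \<Rightarrow> real"
  assumes finite_S: "finite S"
    and measurable_\<sigma>: "\<forall>k. \<sigma> k \<in> M \<rightarrow>\<^sub>M count_space UNIV"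
    and range_\<sigma>: "\<forall>k. \<forall>\<omega>\<in>space M. \<sigma> k \<omega> \<in> S"
    and distr_\<sigma>: "\<forall>k. \<forall>i\<in>S. prob {\<omega>\<in>space M. \<sigma> k \<omega> = i} = p i"
    and indep_\<sigma>: "indep_vars (\<lambda>_. count_space UNIV) \<sigma> UNIV"
begin

definition switch_cylinder :: "nat set \<Rightarrow> (nat \<Rightarrow> nat) \<Rightarrow> 'a set" where
  "switch_cylinder J t = {\<omega>\<in>space M. \<forall>j\<in>J. \<sigma> j \<omega> = t j}"

lemma switch_event_eq: "{\<omega>\<in>space M. \<sigma> k \<omega> = i} = \<sigma> k -` {i} \<inter> space M"
  by auto

lemma switch_event_sets: "{\<omega>\<in>space M. \<sigma> k \<omega> = i} \<in> events"
  unfolding switch_event_eq by (rule measurable_sets[OF measurable_\<sigma>[rule_format]]) auto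

lemma switch_cylinder_sets: "finite J \<Longrightarrow> switch_cylinder J t \<in> events"
proof (induction J rule: finite_induct)
  case empty
  show ?case by (simp add: switch_cylinder_def)
next
  case (insert k J)
  have "switch_cylinder (insert k J) t = switch_cylinder J t \<inter> {\<omega>\<in>space M. \<sigma> k \<omega> = t k}"
    by (auto simp: switch_cylinder_def)
  then show ?case using insert switch_event_sets by auto
qed

lemma prob_switch_cylinder:
  assumes "finite J"
  shows "prob (switch_cylinder J t) = (\<Prod>j\<in>J. prob {\<omega>\<in>space M. \<sigma> j \<omega> = t j})"
proof (cases "J = {}")
  case True
  then show ?thesis by (simp add: switch_cylinder_def prob_space)
next
  case False
  have "switch_cylinder J t = (\<Inter>j\<in>J. \<sigma> j -` {t j} \<inter> space M)"
    using False by (auto simp: switch_cylinder_def)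
  also have "prob \<dots> = (\<Prod>j\<in>J. prob (\<sigma> j -` {t j} \<inter> space M))"
    by (rule indep_varsD[OF indep_\<sigma> False \<open>finite J\<close>]) auto
  finally show ?thesis by (simp add: switch_event_eq)
qed

lemma prob_switch_cylinder_insert:
  assumes "finite J" and "k \<notin> J" and "i \<in> S"
  shows "prob (switch_cylinder (insert k J) (t(k := i))) = p i * prob (switch_cylinder J t)"
proof -
  have "(\<Prod>j\<in>J. prob {\<omega>\<in>space M. \<sigma> j \<omega> = (t(k := i)) j}) = (\<Prod>j\<in>J. prob {\<omega>\<in>space M. \<sigma> j \<omega> = t j})"
    using \<open>k \<notin> J\<close> by (intro prod.cong) auto
  then show ?thesis
    using assms distr_\<sigma> by (simp add: prob_switch_cylinder)
qed

lemma switched_eq_sum_indicator: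
  fixes f :: "nat \<Rightarrow> 'b::real_vector"
  assumes "\<omega> \<in> space M"
  shows "f (\<sigma> k \<omega>) = (\<Sum>i\<in>S. indicator {\<omega>\<in>space M. \<sigma> k \<omega> = i} \<omega> *\<^sub>R f i)"
proof -
  have "(\<Sum>i\<in>S. indicator {\<omega>\<in>space M. \<sigma> k \<omega> = i} \<omega> *\<^sub>R f i) = (\<Sum>i\<in>S. if \<sigma> k \<omega> = i then f i else 0)"
    using assms by (intro sum.cong) (auto simp: indicator_def)
  also have "\<dots> = f (\<sigma> k \<omega>)" using finite_S range_\<sigma> assms by (simp add: sum.delta)
  finally show ?thesis by simp
qed

lemma expectation_switched:
  fixes f :: "nat \<Rightarrow> 'b::{banach, second_countable_topology}"
  shows "integral\<^sup>L M (\<lambda>\<omega>. f (\<sigma> k \<omega>)) = (\<Sum>i\<in>S. p i *\<^sub>R f i)"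
proof -
  have "integral\<^sup>L M (\<lambda>\<omega>. f (\<sigma> k \<omega>))
      = integral\<^sup>L M (\<lambda>\<omega>. \<Sum>i\<in>S. indicator {\<omega>\<in>space M. \<sigma> k \<omega> = i} \<omega> *\<^sub>R f i)"
    by (intro Bochner_Integration.integral_cong refl switched_eq_sum_indicator)
  also have "\<dots> = (\<Sum>i\<in>S. prob {\<omega>\<in>space M. \<sigma> k \<omega> = i} *\<^sub>R f i)"
    by (simp add: Bochner_Integration.integral_sum integral_indicator_scaleR switch_event_sets)
  also have "\<dots> = (\<Sum>i\<in>S. p i *\<^sub>R f i)" using distr_\<sigma> by simp
  finally show ?thesis .
qed

lemma traj_Suc_eq_sum_indicator:
  assumes "\<omega> \<in> space M"
  shows "traj \<Phi> \<sigma> x0 (Suc k) \<omega>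
    = (\<Sum>i\<in>S. indicator {\<omega>\<in>space M. \<sigma> k \<omega> = i} \<omega> *\<^sub>R (\<Phi> i *v traj \<Phi> \<sigma> x0 k \<omega>))"
  using switched_eq_sum_indicator[OF assms, of "\<lambda>i. \<Phi> i *v traj \<Phi> \<sigma> x0 k \<omega>" k] by simp

lemma integrable_traj: "integrable M (traj \<Phi> \<sigma> x0 k)"
proof (induction k)
  case 0
  show ?case by simp
next
  case (Suc k)
  have "integrable M (\<lambda>\<omega>. \<Sum>i\<in>S. indicator {\<omega>\<in>space M. \<sigma> k \<omega> = i} \<omega> *\<^sub>R (\<Phi> i *v traj \<Phi> \<sigma> x0 k \<omega>))"
    by (intro Bochner_Integration.integrable_sum integrable_mult_indicator[OF switch_event_sets]
        integrable_bounded_linear[OF matrix_vector_mul_bounded_linear Suc])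
  then show ?case using traj_Suc_eq_sum_indicator by (subst Bochner_Integration.integrable_cong) auto
qed

text \<open>Restricting to a cylinder event fixing the future switches \<open>\<sigma> j\<close>, \<open>j \<ge> k\<close>, turns
  independence into an induction on \<open>k\<close>.\<close>

lemma integral_indicator_cylinder_traj:
  fixes \<Phi> :: "nat \<Rightarrow> real^'n^'n"
  defines "W \<equiv> \<Sum>i\<in>S. p i *\<^sub>R \<Phi> i"
  assumes "finite J" and "\<forall>j\<in>J. k \<le> j"
  shows "integral\<^sup>L M (\<lambda>\<omega>. indicator (switch_cylinder J t) \<omega> *\<^sub>R traj \<Phi> \<sigma> x0 k \<omega>)
           = prob (switch_cylinder J t) *\<^sub>R (matpow W k *v x0)"
  using assms(2,3)
proof (induction k arbitrary: J t)
  case 0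
  then show ?case by (simp add: integral_indicator_scaleR switch_cylinder_sets)
next
  case (Suc k)
  let ?C = "\<lambda>i. switch_cylinder (insert k J) (t(k := i))"
  let ?T = "traj \<Phi> \<sigma> x0 k"
  have "k \<notin> J" using Suc.prems by auto
  have IH: "integral\<^sup>L M (\<lambda>\<omega>. indicator (?C i) \<omega> *\<^sub>R ?T \<omega>) = prob (?C i) *\<^sub>R (matpow W k *v x0)" for i
    using Suc by (intro Suc.IH) auto
  have integrable: "integrable M (\<lambda>\<omega>. indicator (?C i) \<omega> *\<^sub>R ?T \<omega>)" for i
    using Suc.prems switch_cylinder_sets integrable_traj by (intro integrable_mult_indicator) auto
  have indicator_C: "indicator (switch_cylinder J t) \<omega> * indicator {\<omega>\<in>space M. \<sigma> k \<omega> = i} \<omega>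
      = (indicator (?C i) \<omega> :: real)" for \<omega> i
    using \<open>k \<notin> J\<close> by (auto simp: indicator_def switch_cylinder_def)
  have "integral\<^sup>L M (\<lambda>\<omega>. indicator (switch_cylinder J t) \<omega> *\<^sub>R traj \<Phi> \<sigma> x0 (Suc k) \<omega>)
      = integral\<^sup>L M (\<lambda>\<omega>. \<Sum>i\<in>S. \<Phi> i *v (indicator (?C i) \<omega> *\<^sub>R ?T \<omega>))"
  proof (intro Bochner_Integration.integral_cong refl)
    fix \<omega> assume "\<omega> \<in> space M"
    show "indicator (switch_cylinder J t) \<omega> *\<^sub>R traj \<Phi> \<sigma> x0 (Suc k) \<omega>
        = (\<Sum>i\<in>S. \<Phi> i *v (indicator (?C i) \<omega> *\<^sub>R ?T \<omega>))"
      unfolding traj_Suc_eq_sum_indicator[OF \<open>\<omega> \<in> space M\<close>] scaleR_sum_right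
      by (simp add: indicator_C[symmetric] matrix_vector_mult_scaleR del: traj.simps)
  qed
  also have "\<dots> = (\<Sum>i\<in>S. \<Phi> i *v integral\<^sup>L M (\<lambda>\<omega>. indicator (?C i) \<omega> *\<^sub>R ?T \<omega>))"
  proof -
    have "integrable M (\<lambda>\<omega>. \<Phi> i *v (indicator (?C i) \<omega> *\<^sub>R ?T \<omega>))" for i
      by (rule integrable_bounded_linear[OF matrix_vector_mul_bounded_linear integrable])
    then show ?thesis
      by (simp add: Bochner_Integration.integral_sum
          integral_bounded_linear[OF matrix_vector_mul_bounded_linear integrable])
  qed
  also have "\<dots> = (\<Sum>i\<in>S. (p i * prob (switch_cylinder J t)) *\<^sub>R (\<Phi> i *v (matpow W k *v x0)))"
    using Suc.prems \<open>k \<notin> J\<close>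
    by (intro sum.cong refl) (simp add: IH prob_switch_cylinder_insert matrix_vector_mult_scaleR)
  also have "\<dots> = prob (switch_cylinder J t) *\<^sub>R (matpow W (Suc k) *v x0)"
    by (simp add: W_def matrix_vector_mul_assoc[symmetric] scaleR_sum_right sum_scaleR_matrix_vector_mult mult.commute)
  finally show ?case .
qed

lemma expectation_traj:
  "integral\<^sup>L M (traj \<Phi> \<sigma> x0 k) = matpow (\<Sum>i\<in>S. p i *\<^sub>R \<Phi> i) k *v x0"
proof -
  have "integral\<^sup>L M (traj \<Phi> \<sigma> x0 k)
      = integral\<^sup>L M (\<lambda>\<omega>. indicator (switch_cylinder {} t) \<omega> *\<^sub>R traj \<Phi> \<sigma> x0 k \<omega>)"
    by (intro Bochner_Integration.integral_cong) (auto simp: switch_cylinder_def)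
  then show ?thesis
    using integral_indicator_cylinder_traj[where J = "{}"] by (simp add: switch_cylinder_def prob_space)
qed

end

end

section \<open>Consensus in mean\<close>

lemma mean_matrix_primitive:
  fixes \<Phi> :: "nat \<Rightarrow> real^'n^'n" and S :: "nat set" and p :: "nat \<Rightarrow> real"
  defines "W \<equiv> \<Sum>i\<in>S. p i *\<^sub>R \<Phi> i"
  assumes "finite S" and stochastic: "\<forall>i\<in>S. row_stochastic (\<Phi> i)"
    and p_nonneg: "\<forall>i\<in>S. 0 \<le> p i" and p_sum: "(\<Sum>i\<in>S. p i) = 1"
    and "i\<^sub>0 \<in> S" and "0 < p i\<^sub>0" and diag: "\<forall>u. 0 < \<Phi> i\<^sub>0 $ u $ u"
    and edges: "\<forall>u v. 0 < A$u$v \<longrightarrow> 0 < \<Phi> i\<^sub>0 $ u $ v" and conn: "strongly_connected A"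
  shows "row_stochastic W" and "\<forall>u. 0 < W$u$u" and "strongly_connected W"
proof -
  show "row_stochastic W"
    unfolding W_def using p_nonneg p_sum stochastic by (rule row_stochastic_convex_comb)
  have W_ge: "p i\<^sub>0 * \<Phi> i\<^sub>0 $ u $ v \<le> W$u$v" for u v
    unfolding W_def sum_component vector_scaleR_component real_scaleR_def
    using \<open>finite S\<close> \<open>i\<^sub>0 \<in> S\<close> stochastic p_nonneg
    by (intro member_le_sum[where f = "\<lambda>i. p i * \<Phi> i $ u $ v"]) (auto simp: row_stochastic_def)
  have pos: "0 < W$u$v" if "0 < \<Phi> i\<^sub>0 $ u $ v" for u v
    using mult_pos_pos[OF \<open>0 < p i\<^sub>0\<close> that] W_ge[of u v] by linarith
  then show "\<forall>u. 0 < W$u$u" using diag by blast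
  show "strongly_connected W" using edges pos by (intro strongly_connected_mono[OF conn]) blast
qed

lemma consensus_in_mean:
  fixes M :: "'w measure" and \<sigma> :: "nat \<Rightarrow> 'w \<Rightarrow> nat" and \<Phi> :: "nat \<Rightarrow> real^'n^'n"
    and S :: "nat set" and p :: "nat \<Rightarrow> real"
  defines "W \<equiv> \<Sum>i\<in>S. p i *\<^sub>R \<Phi> i"
  assumes M: "prob_space M" and "finite S"
    and \<sigma>: "\<forall>k. \<sigma> k \<in> M \<rightarrow>\<^sub>M count_space UNIV" "\<forall>k. \<forall>\<omega>\<in>space M. \<sigma> k \<omega> \<in> S"
      "\<forall>k. \<forall>i\<in>S. measure M {\<omega>\<in>space M. \<sigma> k \<omega> = i} = p i"
      "prob_space.indep_vars M (\<lambda>_. count_space UNIV) \<sigma> UNIV"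
    and stochastic: "\<forall>i\<in>S. row_stochastic (\<Phi> i)"
    and p: "\<forall>i\<in>S. 0 \<le> p i" "(\<Sum>i\<in>S. p i) = 1" "i\<^sub>0 \<in> S" "0 < p i\<^sub>0"
    and diag: "\<forall>u. 0 < \<Phi> i\<^sub>0 $ u $ u" and edges: "\<forall>u v. 0 < A$u$v \<longrightarrow> 0 < \<Phi> i\<^sub>0 $ u $ v"
    and conn: "strongly_connected A"
  shows "(\<forall>k. integral\<^sup>L M (\<lambda>\<omega>. \<Phi> (\<sigma> k \<omega>)) = W) \<and>
         (\<exists>\<pi>. (\<forall>j. \<pi>$j > 0) \<and> \<pi> v* W = \<pi> \<and> (\<Sum>j\<in>UNIV. \<pi>$j) = 1 \<and>
            (\<lambda>k. matpow W k) \<longlonglongrightarrow> ones_outer \<pi> \<and>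
            (\<forall>x0. (\<lambda>k. integral\<^sup>L M (traj \<Phi> \<sigma> x0 k)) \<longlonglongrightarrow> ones_outer \<pi> *v x0))"
proof -
  obtain \<pi> where \<pi>: "(\<forall>j. \<pi>$j > 0) \<and> \<pi> v* W = \<pi> \<and> (\<Sum>j\<in>UNIV. \<pi>$j) = 1"
    and lim: "(\<lambda>k. matpow W k) \<longlonglongrightarrow> ones_outer \<pi>"
    using row_stochastic_matpow_tendsto_ones_outer[OF
        mean_matrix_primitive[OF \<open>finite S\<close> stochastic p diag edges conn]]
    unfolding W_def by blast
  moreover have "integral\<^sup>L M (traj \<Phi> \<sigma> x0 k) = matpow W k *v x0" for x0 k
    unfolding W_def by (rule prob_space.expectation_traj[OF M \<open>finite S\<close> \<sigma>])
  moreover have "integral\<^sup>L M (\<lambda>\<omega>. \<Phi> (\<sigma> k \<omega>)) = W" for k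
    unfolding W_def by (rule prob_space.expectation_switched[OF M \<open>finite S\<close> \<sigma>])
  ultimately show ?thesis
    using tendsto_matrix_vector_mult[OF lim] by (intro conjI exI[of _ \<pi>]) auto
qed

theorem theorem1:
  fixes M :: "'w measure" and \<sigma> :: "nat \<Rightarrow> 'w \<Rightarrow> nat"
    and A :: "real^'n^'n" and a1 a2 :: 'n and sc :: scenario
    and p :: "nat \<Rightarrow> real" and h :: real and kbar :: nat
  assumes n3: "CARD('n) \<ge> 3"
    and a12: "a1 \<noteq> a2"
    and graph: "simple_graph_adj A" and conn: "strongly_connected A"
    and p_pos: "\<forall>i\<in>{1..4}. 0 < p i \<and> p i < 1" and p_sum: "(\<Sum>i=1..4. p i) = 1"
    and h_pos: "0 < h" and h_small: "h < 1 / dmax A"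
    and kbar: "kbar \<ge> 1"
    and exp_conn: "strongly_connected (\<Sum>i=1..4. p i *\<^sub>R switch_adj sc a1 a2 A i)"
    and M: "prob_space M"
    and \<sigma>_rv: "\<forall>k. \<sigma> k \<in> M \<rightarrow>\<^sub>M count_space UNIV"
    and \<sigma>_range: "\<forall>k. \<forall>\<omega>\<in>space M. \<sigma> k \<omega> \<in> {1..4}"
    and \<sigma>_dist: "\<forall>k. \<forall>i\<in>{1..4}. measure M {\<omega>\<in>space M. \<sigma> k \<omega> = i} = p i"
    and \<sigma>_indep: "prob_space.indep_vars M (\<lambda>_. count_space UNIV) \<sigma> UNIV"
  shows
    "(let L = (\<lambda>i. laplacian (switch_adj sc a1 a2 A i));
          \<Phi>1 = (\<lambda>i. matpow (mat 1 - h *\<^sub>R L i) kbar);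
          W1 = (\<Sum>i=1..4. p i *\<^sub>R \<Phi>1 i)
      in (\<forall>k. integral\<^sup>L M (\<lambda>\<omega>. \<Phi>1 (\<sigma> k \<omega>)) = W1) \<and>
         (\<exists>\<pi>::real^'n. (\<forall>j. \<pi>$j > 0) \<and> \<pi> v* W1 = \<pi> \<and> sum (\<lambda>j. \<pi>$j) UNIV = 1 \<and>
            (\<lambda>k. matpow W1 k) \<longlonglongrightarrow> ones_outer \<pi> \<and>
            (\<forall>x0. (\<lambda>k. integral\<^sup>L M (traj \<Phi>1 \<sigma> x0 k)) \<longlonglongrightarrow> ones_outer \<pi> *v x0)))
   \<and>
    (let L = (\<lambda>i. laplacian (switch_adj sc a1 a2 A i));
          \<Phi>2 = (\<lambda>i. mexp (- (real kbar * h) *\<^sub>R L i));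
          W2 = (\<Sum>i=1..4. p i *\<^sub>R \<Phi>2 i)
      in (\<forall>k. integral\<^sup>L M (\<lambda>\<omega>. \<Phi>2 (\<sigma> k \<omega>)) = W2) \<and>
         (\<exists>\<pi>::real^'n. (\<forall>j. \<pi>$j > 0) \<and> \<pi> v* W2 = \<pi> \<and> sum (\<lambda>j. \<pi>$j) UNIV = 1 \<and>
            (\<lambda>k. matpow W2 k) \<longlonglongrightarrow> ones_outer \<pi> \<and>
            (\<forall>x0. (\<lambda>k. integral\<^sup>L M (traj \<Phi>2 \<sigma> x0 k)) \<longlonglongrightarrow> ones_outer \<pi> *v x0)))"
proof -
  let ?B = "switch_adj sc a1 a2 A"
  have A_nonneg: "\<forall>u v. 0 \<le> A$u$v"
  proof (intro allI)
    fix u v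
    have "A$u$v = 0 \<or> A$u$v = 1" using graph by (simp add: simple_graph_adj_def)
    then show "0 \<le> A$u$v" by auto
  qed
  have B_bounds: "\<forall>u v. 0 \<le> ?B i $ u $ v" "\<forall>u. (\<Sum>v\<in>UNIV. ?B i $ u $ v) \<le> dmax A" for i
    using switch_adj_bounds[OF A_nonneg] by auto
  have "0 < dmax A"
  proof (rule ccontr)
    assume "\<not> 0 < dmax A"
    then have "1 / dmax A \<le> 0" by simp
    then show False using h_pos h_small by linarith
  qed
  then have h_dmax: "h * dmax A < 1" using h_small by (simp add: field_simps)
  have t_pos: "0 < real kbar * h" using kbar h_pos by simp
  have p: "\<forall>i\<in>{1..4}. 0 \<le> p i" "0 < p 4" using p_pos by auto
  note euler = euler_flow_properties[OF B_bounds h_pos h_dmax kbar]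
  note exp = exp_flow_properties[OF B_bounds t_pos]
  note euler_A = euler_flow_properties[OF B_bounds[of 4] h_pos h_dmax kbar, unfolded switch_adj_A]
  note exp_A = exp_flow_properties[OF B_bounds[of 4] t_pos, unfolded switch_adj_A]
  show ?thesis
    unfolding Let_def
    by (rule conjI; rule consensus_in_mean[where i\<^sub>0 = 4,
          OF M _ \<sigma>_rv \<sigma>_range \<sigma>_dist \<sigma>_indep _ p(1) p_sum _ p(2) _ _ conn])
       (use euler exp euler_A exp_A in \<open>simp_all add: switch_adj_A\<close>)
qed

end
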